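(* Fix $\rho>0$, integers $M\ge N\ge1$ and $c_0,\dots,c_{N-1}>0$, and let $C_m$ ($1\le m\le N$) be as defined below. Then for every $1\le m\le N$ and every $A=\mathbf{u}\mathbf{u}^*\in\mathbb{P}^1_N(\overline{D}(0,\rho))$, every principal $m\times m$ submatrix of $$L_m:=C_m\bigl(c_{N-m}\mathbf{1}_{N\times N}+c_{N-m+1}A+\cdots+c_{N-1}A^{\circ(m-1)}\bigr)-A^{\circ(m+M-N)}$$ is positive semidefinite. In particular (case $m=N$) the polynomial $c_0+\cdots+c_{N-1}z^{N-1}-\mathcal{C}(\mathbf{c};z^M;N,\rho)^{-1}z^M$ preserves positivity entrywise on $\mathbb{P}^1_N(\overline{D}(0,\rho))$.
   Context: $\mathbb{P}^1_N(\overline{D}(0,\rho))$ is the set of $N\times N$ positive semidefinite matrices of rank at most one with entries in the closed disc of radius $\rho$; $A^{\circ n}$ is the entrywise power, $A^{\circ0}=\mathbf{1}_{N\times N}$ the all-ones matrix. $C_m:=\sum_{j=0}^{m-1}\binom{M-N+m}{j}^2\binom{M-N+m-j-1}{m-j-1}^2\rho^{m+M-N-j}/c_{N-m+j}$, and $\mathcal{C}(\mathbf{c};z^M;N,\rho):=C_N=\sum_{j=0}^{N-1}\binom{M}{j}^2\binom{M-j-1}{N-j-1}^2\rho^{M-j}/c_j$. *)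

theory Defs
  imports Complex_Main
begin

text \<open>Matrices are represented as functions nat => nat => complex; only the
entries with indices below the relevant size matter.\<close>

definition psd_on :: "nat set \<Rightarrow> (nat \<Rightarrow> nat \<Rightarrow> complex) \<Rightarrow> bool" where
  "psd_on I B \<longleftrightarrow>
     (\<forall>i\<in>I. \<forall>j\<in>I. B j i = cnj (B i j)) \<and>
     (\<forall>x :: nat \<Rightarrow> complex.
        Im (\<Sum>i\<in>I. \<Sum>j\<in>I. cnj (x i) * B i j * x j) = 0 \<and>
        Re (\<Sum>i\<in>I. \<Sum>j\<in>I. cnj (x i) * B i j * x j) \<ge> 0)"

definition P1 :: "nat \<Rightarrow> real \<Rightarrow> (nat \<Rightarrow> nat \<Rightarrow> complex) set" where
  "P1 N \<rho> = {A. \<exists>u :: nat \<Rightarrow> complex.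
      (\<forall>i<N. \<forall>j<N. A i j = u i * cnj (u j)) \<and>
      (\<forall>i<N. \<forall>j<N. norm (A i j) \<le> \<rho>)}"

definition Cm :: "(nat \<Rightarrow> real) \<Rightarrow> nat \<Rightarrow> nat \<Rightarrow> real \<Rightarrow> nat \<Rightarrow> real" where
  "Cm c M N \<rho> m = (\<Sum>j<m.
      real (((M - N + m) choose j))^2 * real (((M - N + m - j - 1) choose (m - j - 1)))^2
      * \<rho> ^ (m + M - N - j) / c (N - m + j))"

definition Lm :: "(nat \<Rightarrow> real) \<Rightarrow> nat \<Rightarrow> nat \<Rightarrow> real \<Rightarrow> nat \<Rightarrow>
    (nat \<Rightarrow> nat \<Rightarrow> complex) \<Rightarrow> (nat \<Rightarrow> nat \<Rightarrow> complex)" where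
  "Lm c M N \<rho> m A = (\<lambda>i j.
      of_real (Cm c M N \<rho> m) * (\<Sum>k<m. of_real (c (N - m + k)) * A i j ^ k)
      - A i j ^ (m + M - N))"

end

theory Submission
  imports Defs "HOL-Computational_Algebra.Polynomial" "HOL-Analysis.Convex"
begin

text \<open>For A = u u* the quadratic form of sum_k d_k A^(k) (entrywise powers) at x is
sum_k d_k |W_k|^2, where W_k = sum_(j in I) conj(u_j)^k x_j. On an index set I with m elements,
z^n agrees at all the nodes u_j with a polynomial sum_(k<m) a_k z^k whose coefficients satisfy
|a_k| <= C(n,k) C(n-k-1,m-k-1) R^(n-k) when all nodes lie in the disc of radius R. Hence
W_n = sum_k conj(a_k) W_k, and the weighted Cauchy-Schwarz inequality gives
|W_n|^2 <= (sum_k |a_k|^2 / c_k) (sum_k c_k |W_k|^2) <= C_m sum_k c_k |W_k|^2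
with n = m + M - N and R = sqrt rho. Dividing the case m = N by C_N > 0 gives the last claim.\<close>

text \<open>Writing z^n = x^(n-l) z^l + sum_(l <= j < n) x^(n-1-j) (z - x) z^j and replacing each z^j by
the interpolant on ys (of length l) yields a polynomial of degree at most l that still equals z^n
at x and at every node of ys; repeated nodes are allowed.\<close>
fun pow_interp :: "nat \<Rightarrow> 'a::comm_ring_1 list \<Rightarrow> 'a poly" where
  "pow_interp n [] = 0"
| "pow_interp n (x # ys) = monom (x ^ (n - length ys)) (length ys) +
     (\<Sum>j\<in>{length ys..<n}. smult (x ^ (n - 1 - j)) ([:-x, 1:] * pow_interp j ys))"

lemma coeff_linear_factor_mult:
  "coeff ([:-x, 1:] * p) k = (if k = 0 then 0 else coeff p (k - 1)) - x * coeff p k"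
  for x :: "'a::comm_ring_1"
  by (cases k) (simp_all add: coeff_pCons')

lemma coeff_pow_interp_Cons:
  "coeff (pow_interp n (x # ys)) k =
     (if k = length ys then x ^ (n - length ys) else 0) +
     (\<Sum>j\<in>{length ys..<n}. x ^ (n - 1 - j) * coeff ([:-x, 1:] * pow_interp j ys) k)"
  by (simp add: coeff_sum del: mult_pCons_left)

lemma coeff_pow_interp_eq_0: "length xs \<le> k \<Longrightarrow> coeff (pow_interp n xs) k = 0"
proof (induction xs arbitrary: n k)
  case (Cons x ys)
  then show ?case
    unfolding coeff_pow_interp_Cons by (simp add: coeff_linear_factor_mult del: mult_pCons_left)
qed simp

lemma poly_eq_sum_coeff_lessThan:
  fixes p :: "'a::comm_semiring_1 poly"
  assumes "\<And>k. n \<le> k \<Longrightarrow> coeff p k = 0"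
  shows "poly p x = (\<Sum>k<n. coeff p k * x ^ k)"
proof -
  have "poly p x = (\<Sum>k<n + Suc (degree p). coeff p k * x ^ k)"
    unfolding poly_altdef by (rule sum.mono_neutral_left) (auto simp: coeff_eq_0)
  also have "\<dots> = (\<Sum>k<n. coeff p k * x ^ k)"
    by (rule sum.mono_neutral_right) (auto simp: assms)
  finally show ?thesis .
qed

lemma power_telescope:
  fixes x z :: "'a::comm_ring_1"
  assumes "a \<le> n"
  shows "x ^ (n - a) * z ^ a + (\<Sum>j\<in>{a..<n}. x ^ (n - 1 - j) * ((z - x) * z ^ j)) = z ^ n"
proof -
  have "(\<Sum>j\<in>{a..<n}. x ^ (n - 1 - j) * ((z - x) * z ^ j))
      = (\<Sum>j\<in>{a..<n}. x ^ (n - Suc j) * z ^ Suc j - x ^ (n - j) * z ^ j)"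
  proof (rule sum.cong)
    fix j assume "j \<in> {a..<n}"
    then have "n - j = Suc (n - 1 - j)" by auto
    then show "x ^ (n - 1 - j) * ((z - x) * z ^ j) = x ^ (n - Suc j) * z ^ Suc j - x ^ (n - j) * z ^ j"
      by (simp add: algebra_simps)
  qed simp
  also have "\<dots> = z ^ n - x ^ (n - a) * z ^ a"
    using sum_Suc_diff'[OF assms, of "\<lambda>j. x ^ (n - j) * z ^ j"] by simp
  finally show ?thesis by simp
qed

lemma poly_pow_interp: "length xs \<le> n \<Longrightarrow> z \<in> set xs \<Longrightarrow> poly (pow_interp n xs) z = z ^ n"
proof (induction xs arbitrary: n)
  case (Cons x ys)
  have expand: "poly (pow_interp n (x # ys)) z = x ^ (n - length ys) * z ^ length ys +
      (\<Sum>j\<in>{length ys..<n}. x ^ (n - 1 - j) * ((z - x) * poly (pow_interp j ys) z))"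
    by (simp add: poly_sum poly_monom left_diff_distrib)
  show ?case
  proof (cases "z = x")
    case True
    then show ?thesis using expand Cons.prems by (simp flip: power_add)
  next
    case False
    then have "z \<in> set ys" using Cons.prems by simp
    then have "poly (pow_interp j ys) z = z ^ j" if "j \<in> {length ys..<n}" for j
      using Cons.IH that by simp
    then show ?thesis
      using expand power_telescope[of "length ys" n x z] Cons.prems by simp
  qed
qed simp

lemma poly_pow_interp_eq_sum:
  "poly (pow_interp n xs) z = (\<Sum>k<length xs. coeff (pow_interp n xs) k * z ^ k)"
  by (rule poly_eq_sum_coeff_lessThan) (rule coeff_pow_interp_eq_0)

definition interp_coeff_bound :: "nat \<Rightarrow> nat \<Rightarrow> nat \<Rightarrow> nat" where
  "interp_coeff_bound n m k = (n choose k) * ((n - k - 1) choose (m - k - 1))"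

lemma interp_coeff_bound_self: "k \<le> l \<Longrightarrow> interp_coeff_bound l (Suc l) k = (if k = l then 1 else 0)"
  by (auto simp: interp_coeff_bound_def)

text \<open>The bounds satisfy the recursion of \<open>pow_interp\<close> with all signs made positive, so that
the sum over j in the coefficient estimate below telescopes.\<close>
lemma interp_coeff_bound_Suc:
  assumes "k \<le> l" "l \<le> j"
  shows "interp_coeff_bound (Suc j) (Suc l) k = interp_coeff_bound j (Suc l) k
           + (if 1 \<le> k then interp_coeff_bound j l (k - 1) else 0)
           + (if k < l then interp_coeff_bound j l k else 0)"
proof (cases "k = l")
  case True
  then show ?thesis
    by (cases k) (auto simp: interp_coeff_bound_def)
next
  case False
  then have kl: "k < l" using assms by simp
  obtain t where t: "l - k = Suc t" "l - k - 1 = t" using kl by (intro that[of "l - k - 1"]) auto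
  obtain a where a: "j - k = Suc a" using kl assms by (intro that[of "j - k - 1"]) simp
  have pascal: "Suc j choose k = (j choose k) + (if 1 \<le> k then j choose (k - 1) else 0)"
    by (cases k) auto
  have "interp_coeff_bound (Suc j) (Suc l) k = (Suc j choose k) * (Suc a choose Suc t)"
    unfolding interp_coeff_bound_def using a t by (simp add: Suc_diff_le)
  moreover have "interp_coeff_bound j (Suc l) k = (j choose k) * (a choose Suc t)"
    unfolding interp_coeff_bound_def using a t by simp
  moreover have "interp_coeff_bound j l k = (j choose k) * (a choose t)"
    unfolding interp_coeff_bound_def using a t by simp
  moreover have "1 \<le> k \<Longrightarrow> interp_coeff_bound j l (k - 1) = (j choose (k - 1)) * (Suc a choose Suc t)"
    unfolding interp_coeff_bound_def using a t kl by (simp add: Suc_diff_le)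
  ultimately show ?thesis
    using kl pascal by (simp add: algebra_simps)
qed

lemma norm_coeff_linear_factor_step:
  fixes x :: "'a::real_normed_field"
  assumes R: "0 \<le> R" "norm x \<le> R" and kj: "k \<le> j" "j < n"
    and lower: "1 \<le> k \<Longrightarrow> norm (coeff p (k - 1)) \<le> \<beta> * R ^ (j - (k - 1))"
    and upper: "norm (coeff p k) \<le> \<gamma> * R ^ (j - k)"
  shows "norm (x ^ (n - 1 - j) * coeff ([:-x, 1:] * p) k)
           \<le> R ^ (n - k) * ((if 1 \<le> k then \<beta> else 0) + \<gamma>)"
proof -
  define a where "a = (if k = 0 then 0 else coeff p (k - 1))"
  have a_le: "norm a \<le> (if 1 \<le> k then \<beta> * R ^ (j - (k - 1)) else 0)"
    using lower by (simp add: a_def)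
  have "norm (a - x * coeff p k) \<le> norm a + R * norm (coeff p k)"
    using norm_triangle_ineq4[of a "x * coeff p k"] mult_right_mono[OF R(2), of "norm (coeff p k)"]
    by (simp add: norm_mult)
  then have "norm (x ^ (n - 1 - j) * coeff ([:-x, 1:] * p) k)
      \<le> R ^ (n - 1 - j) * (norm a + R * norm (coeff p k))"
    unfolding coeff_linear_factor_mult a_def[symmetric] norm_mult norm_power
    by (intro mult_mono power_mono) (use R in auto)
  also have "\<dots> \<le> R ^ (n - 1 - j) * ((if 1 \<le> k then \<beta> * R ^ (j - (k - 1)) else 0) + R * (\<gamma> * R ^ (j - k)))"
    by (intro mult_left_mono add_mono a_le upper) (use R in auto)
  also have "\<dots> = R ^ (n - k) * ((if 1 \<le> k then \<beta> else 0) + \<gamma>)"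
  proof -
    have lo: "R ^ (n - 1 - j) * (\<beta> * R ^ (j - (k - 1))) = \<beta> * R ^ (n - k)" if "1 \<le> k"
    proof -
      have "(n - 1 - j) + (j - (k - 1)) = n - k" using kj that by auto
      then show ?thesis by (metis mult.left_commute power_add)
    qed
    have hi: "R ^ (n - 1 - j) * (R * (\<gamma> * R ^ (j - k))) = \<gamma> * R ^ (n - k)"
    proof -
      have "Suc ((n - 1 - j) + (j - k)) = n - k" using kj by auto
      then show ?thesis by (metis mult.left_commute power_Suc power_add)
    qed
    show ?thesis
      by (cases "1 \<le> k") (simp_all only: distrib_left distrib_right lo hi if_True if_False
          mult_zero_right add_0 mult.commute)
  qed
  finally show ?thesis .
qed

lemma norm_coeff_pow_interp_le:
  fixes xs :: "'a::real_normed_field list"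
  assumes "0 \<le> R" "\<forall>y\<in>set xs. norm y \<le> R" "length xs \<le> n" "k < length xs"
  shows "norm (coeff (pow_interp n xs) k) \<le> real (interp_coeff_bound n (length xs) k) * R ^ (n - k)"
  using assms(2-)
proof (induction xs arbitrary: n k)
  case (Cons x ys)
  define l where "l = length ys"
  have x: "norm x \<le> R" and n: "Suc l \<le> n" and k: "k \<le> l"
    using Cons.prems by (auto simp: l_def)
  define g where "g j = (if 1 \<le> k then real (interp_coeff_bound j l (k - 1)) else 0)
                        + (if k < l then real (interp_coeff_bound j l k) else 0)" for j
  have summand: "norm (x ^ (n - 1 - j) * coeff ([:-x, 1:] * pow_interp j ys) k) \<le> R ^ (n - k) * g j"
    if j: "j \<in> {l..<n}" for j
    unfolding g_def
  proof (rule norm_coeff_linear_factor_step[OF assms(1) x])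
    show "norm (coeff (pow_interp j ys) k)
            \<le> (if k < l then real (interp_coeff_bound j l k) else 0) * R ^ (j - k)"
      using Cons.IH[of j k] Cons.prems j coeff_pow_interp_eq_0[of ys k j] by (auto simp: l_def)
  qed (use Cons.IH[of j "k - 1"] Cons.prems j k in \<open>auto simp: l_def\<close>)
  have "(\<Sum>j\<in>{l..<n}. g j) = (\<Sum>j\<in>{l..<n}.
           real (interp_coeff_bound (Suc j) (Suc l) k) - real (interp_coeff_bound j (Suc l) k))"
    using interp_coeff_bound_Suc[OF k] by (intro sum.cong) (auto simp: g_def)
  also have "\<dots> = real (interp_coeff_bound n (Suc l) k) - real (interp_coeff_bound l (Suc l) k)"
    by (rule sum_Suc_diff') (use n in simp)
  finally have g_sum: "(\<Sum>j\<in>{l..<n}. g j) = \<dots>" .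
  have "norm (coeff (pow_interp n (x # ys)) k) \<le> norm (if k = l then x ^ (n - l) else 0) +
      (\<Sum>j\<in>{l..<n}. norm (x ^ (n - 1 - j) * coeff ([:-x, 1:] * pow_interp j ys) k))"
    unfolding coeff_pow_interp_Cons l_def[symmetric]
    by (intro order.trans[OF norm_triangle_ineq] add_left_mono norm_sum)
  also have "\<dots> \<le> real (interp_coeff_bound l (Suc l) k) * R ^ (n - k) + (\<Sum>j\<in>{l..<n}. R ^ (n - k) * g j)"
    using interp_coeff_bound_self[OF k] assms(1) x
    by (intro add_mono sum_mono summand) (auto simp: norm_power intro: power_mono)
  also have "\<dots> = real (interp_coeff_bound n (Suc l) k) * R ^ (n - k)"
    by (simp add: g_sum algebra_simps flip: sum_distrib_left sum_distrib_right)
  finally show ?case by (simp add: l_def)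
qed simp

lemma weighted_Cauchy_Schwarz:
  fixes a w c :: "'b \<Rightarrow> real"
  assumes "\<forall>k\<in>K. 0 < c k"
  shows "(\<Sum>k\<in>K. a k * w k)\<^sup>2 \<le> (\<Sum>k\<in>K. (a k)\<^sup>2 / c k) * (\<Sum>k\<in>K. c k * (w k)\<^sup>2)"
proof -
  have "(\<Sum>k\<in>K. a k * w k) = (\<Sum>k\<in>K. (a k / sqrt (c k)) * (sqrt (c k) * w k))"
    using assms by (intro sum.cong) auto
  also have "\<dots>\<^sup>2 \<le> (\<Sum>k\<in>K. (a k / sqrt (c k))\<^sup>2) * (\<Sum>k\<in>K. (sqrt (c k) * w k)\<^sup>2)"
    by (rule Cauchy_Schwarz_ineq_sum)
  also have "\<dots> = (\<Sum>k\<in>K. (a k)\<^sup>2 / c k) * (\<Sum>k\<in>K. c k * (w k)\<^sup>2)"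
    using assms by (intro arg_cong2[where f = "(*)"] sum.cong) (auto simp: power_divide power_mult_distrib)
  finally show ?thesis .
qed

definition power_pairing :: "nat set \<Rightarrow> (nat \<Rightarrow> complex) \<Rightarrow> (nat \<Rightarrow> complex) \<Rightarrow> nat \<Rightarrow> complex" where
  "power_pairing I u x k = (\<Sum>j\<in>I. cnj (u j) ^ k * x j)"

lemma power_pairing_eq_interp:
  assumes "finite I" "card I = m" "m \<le> n"
  shows "power_pairing I u x n =
           (\<Sum>k<m. cnj (coeff (pow_interp n (map u (sorted_list_of_set I))) k) * power_pairing I u x k)"
proof -
  define a where "a = coeff (pow_interp n (map u (sorted_list_of_set I)))"
  have "u j ^ n = (\<Sum>k<m. a k * u j ^ k)" if "j \<in> I" for j
    using poly_pow_interp[of "map u (sorted_list_of_set I)" n "u j"]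
      poly_pow_interp_eq_sum[of n "map u (sorted_list_of_set I)" "u j"] assms that
    by (simp add: a_def)
  then have "power_pairing I u x n = (\<Sum>j\<in>I. \<Sum>k<m. cnj (a k) * (cnj (u j) ^ k * x j))"
    unfolding power_pairing_def
    by (intro sum.cong refl) (simp flip: complex_cnj_power add: sum_distrib_right mult.assoc)
  also have "\<dots> = (\<Sum>k<m. cnj (a k) * power_pairing I u x k)"
    unfolding power_pairing_def by (subst sum.swap) (simp add: sum_distrib_left)
  finally show ?thesis by (simp add: a_def)
qed

lemma norm_power_pairing_le:
  assumes "finite I" "card I = m" "m \<le> n" "0 \<le> \<rho>"
    and u: "\<forall>i\<in>I. norm (u i) \<le> sqrt \<rho>" and c: "\<forall>k<m. 0 < c k"
  shows "(norm (power_pairing I u x n))\<^sup>2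
           \<le> (\<Sum>k<m. real (interp_coeff_bound n m k) ^ 2 * \<rho> ^ (n - k) / c k)
             * (\<Sum>k<m. c k * (norm (power_pairing I u x k))\<^sup>2)"
proof -
  define xs where "xs = map u (sorted_list_of_set I)"
  define a where "a k = norm (coeff (pow_interp n xs) k)" for k
  have a_sq: "(a k)\<^sup>2 \<le> real (interp_coeff_bound n m k) ^ 2 * \<rho> ^ (n - k)" if "k < m" for k
  proof -
    have "a k \<le> real (interp_coeff_bound n m k) * sqrt \<rho> ^ (n - k)"
      using norm_coeff_pow_interp_le[of "sqrt \<rho>" xs n k] assms that by (auto simp: a_def xs_def)
    then have "(a k)\<^sup>2 \<le> (real (interp_coeff_bound n m k) * sqrt \<rho> ^ (n - k))\<^sup>2"
      by (rule power_mono) (simp add: a_def)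
    also have "\<dots> = real (interp_coeff_bound n m k) ^ 2 * \<rho> ^ (n - k)"
    proof -
      have "(sqrt \<rho> ^ (n - k))\<^sup>2 = (sqrt \<rho> ^ 2) ^ (n - k)"
        by (simp only: mult.commute flip: power_mult)
      then show ?thesis using assms(4) by (simp add: power_mult_distrib)
    qed
    finally show ?thesis .
  qed
  have "norm (power_pairing I u x n) \<le> (\<Sum>k<m. a k * norm (power_pairing I u x k))"
    unfolding power_pairing_eq_interp[OF assms(1-3)] a_def xs_def
    by (rule order.trans[OF norm_sum]) (simp add: norm_mult)
  then have "(norm (power_pairing I u x n))\<^sup>2 \<le> (\<Sum>k<m. a k * norm (power_pairing I u x k))\<^sup>2"
    by (rule power_mono) simp
  also have "\<dots> \<le> (\<Sum>k<m. (a k)\<^sup>2 / c k) * (\<Sum>k<m. c k * (norm (power_pairing I u x k))\<^sup>2)"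
    using c by (intro weighted_Cauchy_Schwarz) simp
  also have "\<dots> \<le> (\<Sum>k<m. real (interp_coeff_bound n m k) ^ 2 * \<rho> ^ (n - k) / c k)
                   * (\<Sum>k<m. c k * (norm (power_pairing I u x k))\<^sup>2)"
    using c a_sq by (intro mult_right_mono sum_mono divide_right_mono sum_nonneg) (auto intro: less_imp_le)
  finally show ?thesis .
qed

lemma quadratic_form_rank_one_power:
  assumes "\<forall>i\<in>I. \<forall>j\<in>I. A i j = u i * cnj (u j)"
  shows "(\<Sum>i\<in>I. \<Sum>j\<in>I. cnj (x i) * A i j ^ k * x j) = of_real ((norm (power_pairing I u x k))\<^sup>2)"
proof -
  have "(\<Sum>i\<in>I. \<Sum>j\<in>I. cnj (x i) * A i j ^ k * x j)
      = (\<Sum>i\<in>I. \<Sum>j\<in>I. (cnj (x i) * u i ^ k) * (cnj (u j) ^ k * x j))"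
    using assms by (intro sum.cong refl) (simp add: power_mult_distrib mult_ac)
  also have "\<dots> = (\<Sum>i\<in>I. cnj (x i) * u i ^ k) * power_pairing I u x k"
    by (simp add: power_pairing_def sum_product)
  also have "(\<Sum>i\<in>I. cnj (x i) * u i ^ k) = cnj (power_pairing I u x k)"
    by (simp add: power_pairing_def mult.commute)
  finally show ?thesis
    by (simp only: complex_norm_square mult.commute)
qed

lemma quadratic_form_combination:
  fixes A :: "nat \<Rightarrow> nat \<Rightarrow> complex"
  shows "(\<Sum>i\<in>I. \<Sum>j\<in>I. cnj (x i) * (C1 * (\<Sum>k<m. d k * A i j ^ k) - C2 * A i j ^ n) * x j)
     = C1 * (\<Sum>k<m. d k * (\<Sum>i\<in>I. \<Sum>j\<in>I. cnj (x i) * A i j ^ k * x j))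
       - C2 * (\<Sum>i\<in>I. \<Sum>j\<in>I. cnj (x i) * A i j ^ n * x j)"
proof -
  have "(\<Sum>k<m. d k * (\<Sum>i\<in>I. \<Sum>j\<in>I. cnj (x i) * A i j ^ k * x j))
      = (\<Sum>i\<in>I. \<Sum>j\<in>I. cnj (x i) * (\<Sum>k<m. d k * A i j ^ k) * x j)"
    by (simp add: sum_distrib_left sum_distrib_right mult_ac sum.swap[of _ "{..<m}"])
  then show ?thesis
    by (simp add: algebra_simps sum_subtractf sum_distrib_left)
qed

lemma psd_on_rank_one_power_combination:
  fixes A :: "nat \<Rightarrow> nat \<Rightarrow> complex" and d :: "nat \<Rightarrow> real"
  assumes A: "\<forall>i\<in>I. \<forall>j\<in>I. A i j = u i * cnj (u j)"
    and ineq: "\<And>x. C2 * (norm (power_pairing I u x n))\<^sup>2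
                       \<le> C1 * (\<Sum>k<m. d k * (norm (power_pairing I u x k))\<^sup>2)"
  shows "psd_on I (\<lambda>i j. of_real C1 * (\<Sum>k<m. of_real (d k) * A i j ^ k) - of_real C2 * A i j ^ n)"
  unfolding psd_on_def
proof (intro conjI ballI allI)
  fix i j assume "i \<in> I" "j \<in> I"
  then show "of_real C1 * (\<Sum>k<m. of_real (d k) * A j i ^ k) - of_real C2 * A j i ^ n =
      cnj (of_real C1 * (\<Sum>k<m. of_real (d k) * A i j ^ k) - of_real C2 * A i j ^ n)"
    using A by (simp add: mult.commute)
next
  fix x :: "nat \<Rightarrow> complex"
  have form: "(\<Sum>i\<in>I. \<Sum>j\<in>I. cnj (x i) * (of_real C1 * (\<Sum>k<m. of_real (d k) * A i j ^ k)
                 - of_real C2 * A i j ^ n) * x j)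
      = of_real (C1 * (\<Sum>k<m. d k * (norm (power_pairing I u x k))\<^sup>2)
                 - C2 * (norm (power_pairing I u x n))\<^sup>2)"
    unfolding quadratic_form_combination quadratic_form_rank_one_power[OF A] by simp
  show "Im (\<Sum>i\<in>I. \<Sum>j\<in>I. cnj (x i) * (of_real C1 * (\<Sum>k<m. of_real (d k) * A i j ^ k)
          - of_real C2 * A i j ^ n) * x j) = 0"
    unfolding form by (rule Im_complex_of_real)
  show "0 \<le> Re (\<Sum>i\<in>I. \<Sum>j\<in>I. cnj (x i) * (of_real C1 * (\<Sum>k<m. of_real (d k) * A i j ^ k)
          - of_real C2 * A i j ^ n) * x j)"
    unfolding form using ineq[of x] by simp
qed

lemma psd_on_scaleR:
  assumes r: "0 \<le> r" and B: "psd_on I B"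
  shows "psd_on I (\<lambda>i j. of_real r * B i j)"
  unfolding psd_on_def
proof (intro conjI ballI allI)
  fix i j assume "i \<in> I" "j \<in> I"
  then have "B j i = cnj (B i j)"
    using B unfolding psd_on_def by blast
  then show "of_real r * B j i = cnj (of_real r * B i j)"
    by simp
next
  fix x :: "nat \<Rightarrow> complex"
  have form: "(\<Sum>i\<in>I. \<Sum>j\<in>I. cnj (x i) * (of_real r * B i j) * x j)
      = of_real r * (\<Sum>i\<in>I. \<Sum>j\<in>I. cnj (x i) * B i j * x j)"
    by (simp add: sum_distrib_left mult_ac)
  have "Im (\<Sum>i\<in>I. \<Sum>j\<in>I. cnj (x i) * B i j * x j) = 0"
    and "0 \<le> Re (\<Sum>i\<in>I. \<Sum>j\<in>I. cnj (x i) * B i j * x j)"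
    using B unfolding psd_on_def by blast+
  then show "Im (\<Sum>i\<in>I. \<Sum>j\<in>I. cnj (x i) * (of_real r * B i j) * x j) = 0"
    and "0 \<le> Re (\<Sum>i\<in>I. \<Sum>j\<in>I. cnj (x i) * (of_real r * B i j) * x j)"
    unfolding form using r by simp_all
qed

lemma P1_factor:
  assumes "A \<in> P1 N \<rho>"
  obtains u where "\<forall>i<N. \<forall>j<N. A i j = u i * cnj (u j)" "\<forall>i<N. norm (u i) \<le> sqrt \<rho>"
proof -
  obtain u where u: "\<forall>i<N. \<forall>j<N. A i j = u i * cnj (u j)" and le: "\<forall>i<N. \<forall>j<N. norm (A i j) \<le> \<rho>"
    using assms unfolding P1_def by blast
  have "norm (u i) \<le> sqrt \<rho>" if "i < N" for i
  proof (rule real_le_rsqrt)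
    have "norm (A i i) = (norm (u i))\<^sup>2"
      using u that by (simp add: norm_mult power2_eq_square)
    then show "(norm (u i))\<^sup>2 \<le> \<rho>" using le that by metis
  qed
  with u show thesis by (intro that) auto
qed

lemma Cm_eq_interp_coeff_bound:
  assumes "N \<le> M"
  shows "Cm c M N \<rho> m = (\<Sum>k<m. real (interp_coeff_bound (m + M - N) m k) ^ 2 * \<rho> ^ (m + M - N - k) / c (N - m + k))"
proof -
  have "M - N + m = m + M - N" using assms by simp
  then show ?thesis unfolding Cm_def interp_coeff_bound_def by (simp add: power_mult_distrib)
qed

lemma Cm_pos:
  assumes "0 < \<rho>" "1 \<le> N" "N \<le> M" "\<forall>k<N. 0 < c k"
  shows "0 < Cm c M N \<rho> N"
  unfolding Cm_eq_interp_coeff_bound[OF assms(3)]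
proof (rule sum_pos2[of _ 0])
  have "0 < interp_coeff_bound M N 0" using assms by (simp add: interp_coeff_bound_def)
  then show "0 < real (interp_coeff_bound (N + M - N) N 0) ^ 2 * \<rho> ^ (N + M - N - 0) / c (N - N + 0)"
    using assms by simp
qed (use assms in \<open>auto intro!: divide_nonneg_pos\<close>)

lemma psd_on_Lm:
  assumes "N \<le> M" "0 \<le> \<rho>" "\<forall>k<N. 0 < c k" "m \<le> N"
    and "A \<in> P1 N \<rho>" "I \<subseteq> {..<N}" "card I = m"
  shows "psd_on I (Lm c M N \<rho> m A)"
proof -
  obtain u where A: "\<forall>i<N. \<forall>j<N. A i j = u i * cnj (u j)" and u: "\<forall>i<N. norm (u i) \<le> sqrt \<rho>"
    using P1_factor[OF assms(5)] by blast
  have "finite I" using assms(6) finite_subset by blast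
  have "psd_on I (\<lambda>i j. of_real (Cm c M N \<rho> m) * (\<Sum>k<m. of_real (c (N - m + k)) * A i j ^ k)
                       - of_real 1 * A i j ^ (m + M - N))"
  proof (rule psd_on_rank_one_power_combination)
    show "\<forall>i\<in>I. \<forall>j\<in>I. A i j = u i * cnj (u j)" using A assms(6) by auto
    have "\<forall>i\<in>I. norm (u i) \<le> sqrt \<rho>" "\<forall>k<m. 0 < c (N - m + k)"
      using u assms(3,4,6) by auto
    note bound = norm_power_pairing_le[OF \<open>finite I\<close> assms(7) _ assms(2) this]
    fix x
    show "1 * (norm (power_pairing I u x (m + M - N)))\<^sup>2
            \<le> Cm c M N \<rho> m * (\<Sum>k<m. c (N - m + k) * (norm (power_pairing I u x k))\<^sup>2)"
      unfolding Cm_eq_interp_coeff_bound[OF assms(1)]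
      using bound[of "m + M - N" x] assms(1) by simp
  qed
  then show ?thesis unfolding Lm_def by simp
qed

theorem mainTheorem8:
  fixes \<rho> :: real and M N :: nat and c :: "nat \<Rightarrow> real"
  assumes "\<rho> > 0" and "N \<ge> 1" and "M \<ge> N"
    and "\<forall>k<N. c k > 0"
  shows "(\<forall>m. 1 \<le> m \<and> m \<le> N \<longrightarrow>
           (\<forall>A\<in>P1 N \<rho>. \<forall>I. I \<subseteq> {..<N} \<and> card I = m \<longrightarrow>
              psd_on I (Lm c M N \<rho> m A)))
       \<and> (\<forall>A\<in>P1 N \<rho>. psd_on {..<N}
              (\<lambda>i j. (\<Sum>k<N. of_real (c k) * A i j ^ k)
                     - of_real (1 / Cm c M N \<rho> N) * A i j ^ M))"
proof (intro conjI allI impI ballI)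
  fix m A I assume "1 \<le> m \<and> m \<le> N" "A \<in> P1 N \<rho>" "I \<subseteq> {..<N} \<and> card I = m"
  then show "psd_on I (Lm c M N \<rho> m A)"
    using psd_on_Lm assms by auto
next
  fix A assume "A \<in> P1 N \<rho>"
  then have "psd_on {..<N} (Lm c M N \<rho> N A)"
    using psd_on_Lm[of N M \<rho> c N A "{..<N}"] assms by simp
  then have "psd_on {..<N} (\<lambda>i j. of_real (1 / Cm c M N \<rho> N) * Lm c M N \<rho> N A i j)"
    using Cm_pos[OF assms(1-4)] by (intro psd_on_scaleR) auto
  moreover have "(\<lambda>i j. of_real (1 / Cm c M N \<rho> N) * Lm c M N \<rho> N A i j)
      = (\<lambda>i j. (\<Sum>k<N. of_real (c k) * A i j ^ k) - of_real (1 / Cm c M N \<rho> N) * A i j ^ M)"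
    using Cm_pos[OF assms(1-4)] assms(3) by (auto simp: Lm_def field_simps)
  ultimately show "psd_on {..<N} (\<lambda>i j. (\<Sum>k<N. of_real (c k) * A i j ^ k)
                     - of_real (1 / Cm c M N \<rho> N) * A i j ^ M)"
    by simp
qed

end
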